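(* Let $L>0$ be fixed. There exists $C>0$ such that for all $\delta t\in(0,1)$ and all integers $p\ge1$, $n\ge1$, $$\delta t^2\sum_{\substack{(k_1,k_2)\in\{0,\dots,n-1\}^2\\ 2n-2-k_1-k_2\ge1}}\frac{e^{-p^2\frac{\pi^2}{L^2}(k_1+k_2)\delta t}}{\sqrt{(2n-2-k_1-k_2)\delta t}}\le C.$$ *)

theory Defs
  imports "HOL-Analysis.Analysis"
begin

end

theory Submission
  imports Defs
begin

text \<open>Put \<open>M = n - 1\<close>, \<open>b = p\<^sup>2 \<pi>\<^sup>2 dt / L\<^sup>2\<close> and \<open>j = M - k1\<close>, \<open>l = M - k2\<close>.
  Since \<open>1 / sqrt (j + l) \<le> 1 / sqrt j + 1 / sqrt l\<close>, the double sum is at most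
  \<open>2 A B / sqrt dt\<close>, where \<open>A = \<Sum>k\<le>M. exp (-b k) \<le> 1 + 1/b\<close> is geometric and
  \<open>B = \<Sum>k\<le>M. exp (-b k) / sqrt (M - k)\<close> is a discrete convolution. Splitting \<open>B\<close> at
  \<open>k = M/2\<close>, the terms far from the singularity contribute at most \<open>sqrt (2/M) A\<close>, the others
  at most \<open>exp (-b M/2) \<Sum>j\<le>M. 1 / sqrt j \<le> 2 sqrt M exp (-b M/2)\<close>; both are
  \<open>O(1 + 1 / sqrt b)\<close>. As \<open>b \<ge> \<pi>\<^sup>2 dt / L\<^sup>2\<close>, this gives \<open>A = O(1/dt)\<close> and
  \<open>B = O(1 / sqrt dt)\<close>, which the prefactor \<open>dt\<^sup>2\<close> exactly compensates.\<close>

lemma sum_exp_neg_mult_le: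
  fixes b :: real
  assumes "0 < b"
  shows "(\<Sum>k<n. exp (- (b * real k))) \<le> 1 + 1 / b"
proof -
  define q where "q = exp (- b)"
  have "1 + b \<le> exp b" by (rule exp_ge_add_one_self)
  then have "q \<le> 1 / (1 + b)"
    using assms by (simp add: q_def exp_minus field_simps)
  then have gap: "b / (1 + b) \<le> 1 - q"
    using assms by (simp add: field_simps)
  moreover have "0 < b / (1 + b)"
    using assms by simp
  ultimately have q1: "q < 1"
    by linarith
  have "(\<Sum>k<n. exp (- (b * real k))) = (\<Sum>k<n. q ^ k)"
    by (simp add: q_def mult.commute flip: exp_of_nat_mult)
  also have "\<dots> = (1 - q ^ n) / (1 - q)"
    using q1 by (simp add: sum_gp_strict)
  also have "\<dots> \<le> 1 / (1 - q)"
    using q1 by (simp add: q_def divide_right_mono)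
  also have "\<dots> \<le> 1 / (b / (1 + b))"
    using gap q1 assms by (intro divide_left_mono mult_pos_pos) auto
  also have "\<dots> = 1 + 1 / b"
    using assms by (simp add: field_simps)
  finally show ?thesis .
qed

lemma sum_inverse_sqrt_le: "(\<Sum>j\<le>M. 1 / sqrt (real j)) \<le> 2 * sqrt (real M)"
proof (induction M)
  case 0
  show ?case by simp
next
  case (Suc M)
  have "1 / sqrt (real M + 1) = 2 / (2 * sqrt (real M + 1))"
    by simp
  also have "\<dots> \<le> 2 / (sqrt (real M + 1) + sqrt (real M))"
    by (intro divide_left_mono mult_pos_pos add_pos_nonneg) auto
  also have "\<dots> = 2 * (sqrt (real M + 1) - sqrt (real M))"
  proof -
    have "0 < sqrt (real M + 1) + sqrt (real M)"
      by (simp add: add_pos_nonneg)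
    then show ?thesis
      by (subst nonzero_divide_eq_eq) (simp_all add: algebra_simps)
  qed
  finally have "1 / sqrt (real (Suc M)) \<le> 2 * sqrt (real (Suc M)) - 2 * sqrt (real M)"
    by (simp add: add.commute)
  then show ?case
    using Suc.IH by simp
qed

text \<open>With the convention \<open>1 / 0 = 0\<close> this holds for all \<open>x, y \<ge> 0\<close>;
  likewise \<open>1 / sqrt (real j)\<close> vanishes at \<open>j = 0\<close> throughout.\<close>

lemma inverse_sqrt_add_le:
  fixes x y :: real
  assumes "0 \<le> x" "0 \<le> y"
  shows "1 / sqrt (x + y) \<le> 1 / sqrt x + 1 / sqrt y"
proof (cases "x = 0")
  case False
  then have "1 / sqrt (x + y) \<le> 1 / sqrt x"
    using assms by (intro divide_left_mono) auto
  then show ?thesis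
    using assms by (simp add: add_increasing2)
qed simp

lemma sqrt_mult_exp_neg_le:
  fixes c x :: real
  assumes "0 < c" "0 \<le> x"
  shows "sqrt x * exp (- (c * x)) \<le> 1 / sqrt c"
proof -
  have "0 \<le> c * x"
    using assms by simp
  then have "c * x \<le> exp (2 * (c * x))"
    using exp_ge_add_one_self[of "2 * (c * x)"] by linarith
  then have "c * x \<le> exp (c * x) ^ 2"
    by (simp add: power2_eq_square flip: exp_add)
  then have "sqrt c * sqrt x \<le> exp (c * x)"
    by (simp add: real_le_lsqrt flip: real_sqrt_mult)
  then show ?thesis
    using assms by (simp add: exp_minus field_simps)
qed

lemma sqrt_div_mult_sum_exp_neg_le:
  fixes b :: real
  assumes "0 < b" "0 < M"
  shows "sqrt (2 / real M) * (\<Sum>k\<le>M. exp (- (b * real k))) \<le> 2 * sqrt (1 + 1 / b)"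
proof -
  define S where "S = (\<Sum>k\<le>M. exp (- (b * real k)))"
  \<comment> \<open>Take the geometric mean of the trivial bound \<open>S \<le> 2M\<close> and the bound \<open>S \<le> 1 + 1/b\<close>.\<close>
  have "S \<le> 1 + 1 / b"
    using sum_exp_neg_mult_le[OF assms(1), of "Suc M"] by (simp add: S_def lessThan_Suc_atMost)
  moreover have "S \<le> 2 * real M"
  proof -
    have "S \<le> (\<Sum>k\<le>M. 1)"
      unfolding S_def using assms by (intro sum_mono) simp
    then show ?thesis
      using assms by simp
  qed
  moreover have "0 \<le> S"
    by (simp add: S_def sum_nonneg)
  ultimately have "S\<^sup>2 \<le> 2 * real M * (1 + 1 / b)"
    unfolding power2_eq_square by (intro mult_mono) auto
  have "(sqrt (2 / real M) * S)\<^sup>2 = 2 / real M * S\<^sup>2"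
    by (simp add: power_mult_distrib)
  also have "\<dots> \<le> 2 / real M * (2 * real M * (1 + 1 / b))"
    using \<open>S\<^sup>2 \<le> _\<close> by (rule mult_left_mono) simp
  also have "\<dots> = 4 * (1 + 1 / b)"
    using assms by simp
  finally have "sqrt (2 / real M) * S \<le> sqrt (4 * (1 + 1 / b))"
    by (rule real_le_rsqrt)
  then show ?thesis
    unfolding S_def by (simp only: real_sqrt_mult real_sqrt_four)
qed

text \<open>Either \<open>k\<close> is at distance \<open>\<ge> M/2\<close> from the singularity at \<open>k = M\<close>, or the
  exponential has already decayed to \<open>exp (- b M/2)\<close>.\<close>

lemma exp_neg_mult_div_sqrt_split_le:
  fixes b :: real
  assumes "0 < b" "0 < M" "k \<le> M"
  shows "exp (- (b * real k)) / sqrt (real (M - k))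
           \<le> sqrt (2 / real M) * exp (- (b * real k))
              + exp (- (b / 2 * real M)) * (1 / sqrt (real (M - k)))"
proof (cases "2 * k \<le> M")
  case True
  then have "sqrt (real M / 2) \<le> sqrt (real (M - k))"
    by (simp add: of_nat_diff)
  then have "1 / sqrt (real (M - k)) \<le> 1 / sqrt (real M / 2)"
    using assms by (intro divide_left_mono) auto
  also have "\<dots> = sqrt (2 / real M)"
    by (simp add: real_sqrt_divide)
  finally have "exp (- (b * real k)) * (1 / sqrt (real (M - k)))
      \<le> exp (- (b * real k)) * sqrt (2 / real M)"
    by (intro mult_left_mono) auto
  then show ?thesis
    by (simp add: mult.commute add_increasing2)
next
  case False
  then have "exp (- (b * real k)) \<le> exp (- (b / 2 * real M))"
    using assms by simp
  then have "exp (- (b * real k)) / sqrt (real (M - k))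
      \<le> exp (- (b / 2 * real M)) * (1 / sqrt (real (M - k)))"
    by (simp add: divide_right_mono)
  then show ?thesis
    by (simp add: add_increasing)
qed

lemma sum_exp_neg_mult_div_sqrt_le:
  fixes b :: real
  assumes "0 < b"
  shows "(\<Sum>k\<le>M. exp (- (b * real k)) / sqrt (real (M - k)))
           \<le> 2 * sqrt (1 + 1 / b) + 2 * sqrt (2 / b)"
proof (cases "M = 0")
  case True
  have "0 \<le> sqrt (1 + 1 / b)" "0 \<le> sqrt (2 / b)"
    using assms by simp_all
  then show ?thesis
    using True by simp
next
  case False
  define S where "S = (\<Sum>k\<le>M. exp (- (b * real k)))"
  define E where "E = exp (- (b / 2 * real M))"
  have "(\<Sum>k\<le>M. exp (- (b * real k)) / sqrt (real (M - k)))
      \<le> (\<Sum>k\<le>M. sqrt (2 / real M) * exp (- (b * real k)) + E * (1 / sqrt (real (M - k))))"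
    unfolding E_def using False assms by (intro sum_mono exp_neg_mult_div_sqrt_split_le) auto
  also have "\<dots> = sqrt (2 / real M) * S + E * (\<Sum>j\<le>M. 1 / sqrt (real j))"
    using sum.atLeastAtMost_rev[of "\<lambda>j. 1 / sqrt (real j)" 0 M]
    by (simp add: S_def sum.distrib atMost_atLeast0 sum_distrib_left)
  also have "\<dots> \<le> 2 * sqrt (1 + 1 / b) + 2 * sqrt (2 / b)"
  proof (rule add_mono)
    show "sqrt (2 / real M) * S \<le> 2 * sqrt (1 + 1 / b)"
      unfolding S_def using False by (intro sqrt_div_mult_sum_exp_neg_le assms) simp
  next
    have "E * (\<Sum>j\<le>M. 1 / sqrt (real j)) \<le> 2 * (sqrt (real M) * E)"
      using sum_inverse_sqrt_le[of M] by (simp add: E_def)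
    also have "\<dots> \<le> 2 * (1 / sqrt (b / 2))"
      using sqrt_mult_exp_neg_le[of "b / 2" "real M"] assms by (simp add: E_def)
    finally show "E * (\<Sum>j\<le>M. 1 / sqrt (real j)) \<le> 2 * sqrt (2 / b)"
      by (simp add: real_sqrt_divide)
  qed
  finally show ?thesis .
qed

lemma double_sum_exp_neg_mult_div_sqrt_le:
  fixes b :: real
  assumes "0 < b"
  shows "(\<Sum>k1\<le>M. \<Sum>k2\<le>M.
            exp (- (b * real (k1 + k2))) / sqrt (real (M - k1) + real (M - k2)))
           \<le> 2 * (1 + 1 / b) * (2 * sqrt (1 + 1 / b) + 2 * sqrt (2 / b))"
proof -
  define e where "e k = exp (- (b * real k))" for k
  define A where "A = (\<Sum>k\<le>M. e k)"
  define B where "B = (\<Sum>k\<le>M. e k / sqrt (real (M - k)))"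
  have "exp (- (b * real (k1 + k2))) / sqrt (real (M - k1) + real (M - k2))
      \<le> e k1 / sqrt (real (M - k1)) * e k2 + e k1 * (e k2 / sqrt (real (M - k2)))" for k1 k2
  proof -
    have "exp (- (b * real (k1 + k2))) / sqrt (real (M - k1) + real (M - k2))
        = e k1 * e k2 * (1 / sqrt (real (M - k1) + real (M - k2)))"
      by (simp add: e_def algebra_simps flip: exp_add)
    also have "\<dots> \<le> e k1 * e k2 * (1 / sqrt (real (M - k1)) + 1 / sqrt (real (M - k2)))"
      by (intro mult_left_mono inverse_sqrt_add_le) (simp_all add: e_def)
    also have "\<dots> = e k1 / sqrt (real (M - k1)) * e k2 + e k1 * (e k2 / sqrt (real (M - k2)))"
      by (simp add: algebra_simps)
    finally show ?thesis .
  qed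
  then have "(\<Sum>k1\<le>M. \<Sum>k2\<le>M.
            exp (- (b * real (k1 + k2))) / sqrt (real (M - k1) + real (M - k2)))
      \<le> (\<Sum>k1\<le>M. \<Sum>k2\<le>M.
            e k1 / sqrt (real (M - k1)) * e k2 + e k1 * (e k2 / sqrt (real (M - k2))))"
    by (intro sum_mono)
  also have "\<dots> = B * A + A * B"
    by (simp add: A_def B_def sum_product sum.distrib)
  also have "\<dots> \<le> 2 * (1 + 1 / b) * (2 * sqrt (1 + 1 / b) + 2 * sqrt (2 / b))"
  proof -
    have "A \<le> 1 + 1 / b"
      using sum_exp_neg_mult_le[OF assms, of "Suc M"]
      by (simp add: A_def e_def lessThan_Suc_atMost)
    moreover have "B \<le> 2 * sqrt (1 + 1 / b) + 2 * sqrt (2 / b)"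
      unfolding B_def e_def by (rule sum_exp_neg_mult_div_sqrt_le[OF assms])
    moreover have "0 \<le> A" "0 \<le> B"
      unfolding A_def B_def e_def by (intro sum_nonneg divide_nonneg_nonneg; simp)+
    ultimately have "A * B \<le> (1 + 1 / b) * (2 * sqrt (1 + 1 / b) + 2 * sqrt (2 / b))"
      using assms by (intro mult_mono) auto
    then show ?thesis
      unfolding mult.commute[of B A] mult.assoc by linarith
  qed
  finally show ?thesis .
qed

lemma double_sum_bound_rescale:
  fixes a b dt :: real
  assumes "0 < a" "a * dt \<le> b" "0 < dt" "dt \<le> 1"
  shows "2 * (1 + 1 / b) * (2 * sqrt (1 + 1 / b) + 2 * sqrt (2 / b))
           \<le> 2 * (1 + 1 / a) * (2 * sqrt (1 + 1 / a) + 2 * sqrt (2 / a)) / (dt * sqrt dt)"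
proof -
  have "0 < b"
    using assms by (meson less_le_trans mult_pos_pos)
  then have inv_b: "1 / b \<le> 1 / a / dt"
    using assms by (simp add: divide_left_mono)
  moreover have "1 \<le> 1 / dt"
    using assms by simp
  ultimately have le1: "1 + 1 / b \<le> (1 + 1 / a) / dt"
    by (simp add: add_divide_distrib)
  have le2: "2 / b \<le> 2 / a / dt"
    using inv_b by (simp add: divide_inverse)
  have "sqrt (1 + 1 / b) \<le> sqrt (1 + 1 / a) / sqrt dt"
    using le1 by (simp flip: real_sqrt_divide)
  moreover have "sqrt (2 / b) \<le> sqrt (2 / a) / sqrt dt"
    using le2 by (simp flip: real_sqrt_divide)
  ultimately have "2 * sqrt (1 + 1 / b) + 2 * sqrt (2 / b)
      \<le> (2 * sqrt (1 + 1 / a) + 2 * sqrt (2 / a)) / sqrt dt"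
    by (simp add: add_divide_distrib)
  with le1 \<open>0 < b\<close> have "(1 + 1 / b) * (2 * sqrt (1 + 1 / b) + 2 * sqrt (2 / b))
      \<le> (1 + 1 / a) / dt * ((2 * sqrt (1 + 1 / a) + 2 * sqrt (2 / a)) / sqrt dt)"
    using assms by (intro mult_mono) auto
  from mult_left_mono[OF this, of 2] show ?thesis
    by (simp only: mult.assoc times_divide_eq_right divide_divide_eq_left) simp
qed

lemma sum_pairs_exp_div_sqrt_le:
  fixes a dt :: real
  assumes "0 < dt"
  shows "(\<Sum>(k1, k2) \<in> {(k1, k2). k1 < Suc M \<and> k2 < Suc M \<and>
                         1 \<le> 2 * int (Suc M) - 2 - int k1 - int k2}.
            exp (- (a * real (k1 + k2) * dt))
            / sqrt (real_of_int (2 * int (Suc M) - 2 - int k1 - int k2) * dt))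
         \<le> (\<Sum>k1\<le>M. \<Sum>k2\<le>M.
                exp (- (a * dt * real (k1 + k2))) / sqrt (real (M - k1) + real (M - k2))) / sqrt dt"
    (is "sum ?f ?P \<le> _")
proof -
  define g where "g = (\<lambda>(k1, k2). exp (- (a * dt * real (k1 + k2)))
                         / sqrt (real (M - k1) + real (M - k2)) / sqrt dt)"
  have "sum ?f ?P = sum g ?P"
  proof (rule sum.cong)
    fix x assume "x \<in> ?P"
    then obtain k1 k2 where "x = (k1, k2)" "k1 \<le> M" "k2 \<le> M"
      by auto
    then show "(case x of (k1, k2) \<Rightarrow> exp (- (a * real (k1 + k2) * dt))
            / sqrt (real_of_int (2 * int (Suc M) - 2 - int k1 - int k2) * dt)) = g x"
      by (simp add: g_def of_nat_diff real_sqrt_mult mult_ac)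
  qed simp
  also have "\<dots> \<le> sum g ({..M} \<times> {..M})"
    using assms by (intro sum_mono2) (auto simp: g_def)
  also have "\<dots> = (\<Sum>k1\<le>M. \<Sum>k2\<le>M.
                exp (- (a * dt * real (k1 + k2))) / sqrt (real (M - k1) + real (M - k2))) / sqrt dt"
    unfolding sum_divide_distrib sum.cartesian_product by (simp add: g_def case_prod_unfold)
  finally show ?thesis .
qed

lemma scaled_sum_pairs_exp_div_sqrt_le:
  fixes a c dt :: real and n :: nat
  assumes "0 < a" "a \<le> c" "0 < dt" "dt \<le> 1" "1 \<le> n"
  shows "dt ^ 2 * (\<Sum>(k1, k2) \<in> {(k1, k2). k1 < n \<and> k2 < n \<and>
                         1 \<le> 2 * int n - 2 - int k1 - int k2}.
              exp (- (c * real (k1 + k2) * dt))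
              / sqrt (real_of_int (2 * int n - 2 - int k1 - int k2) * dt))
           \<le> 2 * (1 + 1 / a) * (2 * sqrt (1 + 1 / a) + 2 * sqrt (2 / a))"
proof -
  obtain M where n: "n = Suc M"
    using \<open>1 \<le> n\<close> by (cases n) auto
  define b where "b = c * dt"
  have "a * dt \<le> b"
    using assms by (simp add: b_def mult_right_mono)
  then have "0 < b"
    using assms by (meson less_le_trans mult_pos_pos)
  have "dt ^ 2 * (\<Sum>(k1, k2) \<in> {(k1, k2). k1 < n \<and> k2 < n \<and>
                         1 \<le> 2 * int n - 2 - int k1 - int k2}.
              exp (- (c * real (k1 + k2) * dt))
              / sqrt (real_of_int (2 * int n - 2 - int k1 - int k2) * dt))
      \<le> dt ^ 2 * ((\<Sum>k1\<le>M. \<Sum>k2\<le>M.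
              exp (- (b * real (k1 + k2))) / sqrt (real (M - k1) + real (M - k2))) / sqrt dt)"
    unfolding n b_def by (intro mult_left_mono sum_pairs_exp_div_sqrt_le \<open>0 < dt\<close>) simp
  also have "\<dots> \<le> dt ^ 2 * (2 * (1 + 1 / b) * (2 * sqrt (1 + 1 / b) + 2 * sqrt (2 / b)) / sqrt dt)"
    using \<open>0 < dt\<close>
    by (intro mult_left_mono divide_right_mono double_sum_exp_neg_mult_div_sqrt_le \<open>0 < b\<close>) simp_all
  also have "\<dots> \<le> dt ^ 2 * (2 * (1 + 1 / a) * (2 * sqrt (1 + 1 / a) + 2 * sqrt (2 / a))
                          / (dt * sqrt dt) / sqrt dt)"
    using \<open>a * dt \<le> b\<close> assms
    by (intro mult_left_mono divide_right_mono double_sum_bound_rescale) simp_all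
  also have "\<dots> = 2 * (1 + 1 / a) * (2 * sqrt (1 + 1 / a) + 2 * sqrt (2 / a))"
    using \<open>0 < dt\<close> by (simp add: field_simps power2_eq_square)
  finally show ?thesis .
qed

theorem lemma6p4:
  fixes L :: real
  assumes "L > 0"
  shows "\<exists>C>0. \<forall>dt::real. \<forall>p::nat. \<forall>n::nat.
           0 < dt \<longrightarrow> dt < 1 \<longrightarrow> 1 \<le> p \<longrightarrow> 1 \<le> n \<longrightarrow>
           dt ^ 2 * (\<Sum>(k1, k2) \<in> {(k1, k2). k1 < n \<and> k2 < n \<and>
                         1 \<le> 2 * int n - 2 - int k1 - int k2}.
              exp (- ((real p) ^ 2 * pi ^ 2 / L ^ 2 * real (k1 + k2) * dt))
              / sqrt (real_of_int (2 * int n - 2 - int k1 - int k2) * dt)) \<le> C"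
proof -
  define a where "a = pi ^ 2 / L ^ 2"
  have "0 < a"
    using assms by (simp add: a_def)
  have "a \<le> real p ^ 2 * pi ^ 2 / L ^ 2" if "1 \<le> p" for p :: nat
    using that \<open>0 < a\<close> mult_right_mono[of 1 "real p ^ 2" a] by (simp add: a_def)
  moreover have "0 < 2 * (1 + 1 / a) * (2 * sqrt (1 + 1 / a) + 2 * sqrt (2 / a))"
    using \<open>0 < a\<close> by (simp add: add_pos_pos)
  ultimately show ?thesis
    using \<open>0 < a\<close> by (blast intro: scaled_sum_pairs_exp_div_sqrt_le less_imp_le)
qed

end
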